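(* Let $S,T$ be finite sets, $L:\{0,1\}^S\to\{0,1\}$ a monotone Boolean function, and $\psi:S\to T$ a function with $|\psi(A)|=|A|$ for every minimal one-set $A$ of $L$. Let $X=(X(i))_{i\in S}$ and $Y=(Y(j))_{j\in T}$ be i.i.d. Boolean collections with intensity $p\in[0,1]$. Assume moreover that there are $i_1,i_2\in S$ and $j_0\in T$ with $\psi^{-1}(\{j_0\})=\{i_1,i_2\}$ and $|\psi^{-1}(\{j\})|=1$ for all $j\neq j_0$. Then $$\mathbb P[L(X)=1]-\mathbb P[L(Y\circ\psi)=1]=p(1-p)\Big\{\mathbb P\big[L^X_{i_1,i_2}=f_\vee\big]-\mathbb P\big[L^X_{i_1,i_2}=f_\wedge\big]\Big\}.$$
   Context: - Monotone: $x\leq y$ pointwise implies $L(x)\leq L(y)$. - A one-set of $L$ is $A\subset S$ with $L(1_A)=1$; it is minimal if it contains no other one-set as a proper subset. - Intensity $p$ means $\mathbb P[\cdot=1]=p$; $(Y\circ\psi)(i)=Y(\psi(i))$. - For distinct $i_1,i_2\in S$ and $x\in\{0,1\}^S$, $L^x_{i_1,i_2}:\{0,1\}^2\to\{0,1\}$ is $L^x_{i_1,i_2}(z_1,z_2):=L(x')$, where $x'(i_k)=z_k$ for $k=1,2$ and $x'(i)=x(i)$ otherwise. - $f_\vee(z_1,z_2)=z_1\vee z_2$ and $f_\wedge(z_1,z_2)=z_1\wedge z_2$. *)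

theory Defs
  imports "HOL-Probability.Probability"
begin

text \<open>Boolean configurations on a set S: functions 'a => bool that are False outside S
  (we identify 0 with False and 1 with True).\<close>
definition bconf :: "'a set \<Rightarrow> ('a \<Rightarrow> bool) set" where
  "bconf S = {x. \<forall>i. i \<notin> S \<longrightarrow> \<not> x i}"

definition monotone_bf :: "'a set \<Rightarrow> (('a \<Rightarrow> bool) \<Rightarrow> bool) \<Rightarrow> bool" where
  "monotone_bf S L \<longleftrightarrow>
     (\<forall>x\<in>bconf S. \<forall>y\<in>bconf S. (\<forall>i\<in>S. x i \<longrightarrow> y i) \<longrightarrow> L x \<longrightarrow> L y)"

definition one_set :: "'a set \<Rightarrow> (('a \<Rightarrow> bool) \<Rightarrow> bool) \<Rightarrow> 'a set \<Rightarrow> bool" where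
  "one_set S L A \<longleftrightarrow> A \<subseteq> S \<and> L (\<lambda>i. i \<in> A)"

definition minimal_one_set :: "'a set \<Rightarrow> (('a \<Rightarrow> bool) \<Rightarrow> bool) \<Rightarrow> 'a set \<Rightarrow> bool" where
  "minimal_one_set S L A \<longleftrightarrow> one_set S L A \<and> (\<forall>B. B \<subset> A \<longrightarrow> \<not> one_set S L B)"

definition iid_bool :: "'a set \<Rightarrow> real \<Rightarrow> ('a \<Rightarrow> bool) pmf" where
  "iid_bool S p = Pi_pmf S False (\<lambda>_. bernoulli_pmf p)"

definition Lpair :: "(('a \<Rightarrow> bool) \<Rightarrow> bool) \<Rightarrow> 'a \<Rightarrow> 'a \<Rightarrow> ('a \<Rightarrow> bool) \<Rightarrow> bool \<Rightarrow> bool \<Rightarrow> bool" where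
  "Lpair L i1 i2 x = (\<lambda>z1 z2. L (x(i1 := z1, i2 := z2)))"

definition f_or :: "bool \<Rightarrow> bool \<Rightarrow> bool" where "f_or z1 z2 = (z1 \<or> z2)"
definition f_and :: "bool \<Rightarrow> bool \<Rightarrow> bool" where "f_and z1 z2 = (z1 \<and> z2)"

end

theory Submission
  imports Defs
begin

(* Condition on the configuration x of X off {i1, i2} and let g = L^x_{i1,i2}. Given x, X
   contributes g(a, b) for two independent Bernoulli(p) bits a, b, whereas Y o \<psi> contributes
   g(c, c) for a single bit c, because \<psi> merges i1 and i2 and is a bijection elsewhere. The
   conditional difference is therefore
     p^2 g(1,1) + p(1-p) (g(1,0) + g(0,1)) + (1-p)^2 g(0,0) - p g(1,1) - (1-p) g(0,0)
       = p(1-p) (g(1,0) + g(0,1) - g(1,1) - g(0,0)),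
   and for monotone g the bracket is 1 if g = f_or, -1 if g = f_and and 0 otherwise. *)

lemma measure_pmf_prob_bind_bernoulli:
  assumes "0 \<le> p" "p \<le> 1"
  shows "measure_pmf.prob (bind_pmf (bernoulli_pmf p) M) A
           = p * measure_pmf.prob (M True) A + (1 - p) * measure_pmf.prob (M False) A"
proof -
  have "ennreal (measure_pmf.prob (bind_pmf (bernoulli_pmf p) M) A)
          = emeasure (M True) A * ennreal p + emeasure (M False) A * ennreal (1 - p)"
    using assms by (simp add: measure_pmf.emeasure_eq_measure[symmetric])
  also have "\<dots> = ennreal (p * measure_pmf.prob (M True) A + (1 - p) * measure_pmf.prob (M False) A)"
    using assms by (simp add: measure_pmf.emeasure_eq_measure ennreal_mult mult.commute)
  finally show ?thesis
    using assms by (simp del: ennreal_plus)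
qed

lemma set_pmf_iid_bool: "finite S \<Longrightarrow> set_pmf (iid_bool S p) \<subseteq> bconf S"
  using set_Pi_pmf_subset[of S False] by (auto simp: iid_bool_def bconf_def)

lemma iid_bool_insert:
  assumes "finite A" "i \<notin> A"
  shows "iid_bool (insert i A) p
           = bind_pmf (bernoulli_pmf p) (\<lambda>a. map_pmf (\<lambda>x. x(i := a)) (iid_bool A p))"
  using assms by (simp add: iid_bool_def Pi_pmf_insert' map_pmf_def)

lemma prob_iid_bool_insert:
  assumes "finite A" "i \<notin> A" "0 \<le> p" "p \<le> 1"
  shows "measure_pmf.prob (iid_bool (insert i A) p) {x. Q x}
           = p * measure_pmf.prob (iid_bool A p) {x. Q (x(i := True))}
             + (1 - p) * measure_pmf.prob (iid_bool A p) {x. Q (x(i := False))}"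
  using assms by (simp add: iid_bool_insert measure_pmf_prob_bind_bernoulli vimage_def)

lemma prob_iid_bool_insert2:
  assumes "finite A" "i1 \<notin> A" "i2 \<notin> A" "i1 \<noteq> i2" "0 \<le> p" "p \<le> 1"
  shows "measure_pmf.prob (iid_bool (insert i1 (insert i2 A)) p) {x. Q x}
    = p * (p * measure_pmf.prob (iid_bool A p) {x. Q (x(i1 := True, i2 := True))}
           + (1 - p) * measure_pmf.prob (iid_bool A p) {x. Q (x(i1 := True, i2 := False))})
      + (1 - p) * (p * measure_pmf.prob (iid_bool A p) {x. Q (x(i1 := False, i2 := True))}
           + (1 - p) * measure_pmf.prob (iid_bool A p) {x. Q (x(i1 := False, i2 := False))})"
  using assms by (simp add: prob_iid_bool_insert fun_upd_twist)

lemma iid_bool_bij_betw: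
  assumes "finite A" "bij_betw h A B" "B \<noteq> UNIV"
  shows "map_pmf (\<lambda>Y i. if i \<in> A then Y (h i) else False) (iid_bool B p) = iid_bool A p"
proof -
  (* Pi_pmf_bij_betw needs h to map the complement of A outside B. *)
  obtain b where b: "b \<notin> B"
    using assms(3) by blast
  define h' where "h' i = (if i \<in> A then h i else b)" for i
  have "bij_betw h' A B"
    using assms(2) by (simp add: h'_def cong: bij_betw_cong)
  then have "iid_bool A p = map_pmf (\<lambda>Y. Y \<circ> h') (iid_bool B p)"
    unfolding iid_bool_def by (rule Pi_pmf_bij_betw[OF assms(1)]) (simp add: h'_def b)
  also have "\<dots> = map_pmf (\<lambda>Y i. if i \<in> A then Y (h i) else False) (iid_bool B p)"
  proof (rule map_pmf_cong[OF refl])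
    fix Y assume "Y \<in> set_pmf (iid_bool B p)"
    then have "Y b = False"
      using set_pmf_iid_bool[OF bij_betw_finite[THEN iffD1, OF assms(2,1)]] b
      by (auto simp: bconf_def)
    then show "Y \<circ> h' = (\<lambda>i. if i \<in> A then Y (h i) else False)"
      by (auto simp: h'_def fun_eq_iff)
  qed
  finally show ?thesis ..
qed

lemma bij_betw_if_card_fibres_eq_1:
  assumes "f ` A \<subseteq> B" "\<And>j. j \<in> B \<Longrightarrow> card {i \<in> A. f i = j} = 1"
  shows "bij_betw f A B"
proof (rule bij_betw_imageI)
  have fibre: "\<exists>k. {i \<in> A. f i = j} = {k}" if "j \<in> B" for j
    using assms(2)[OF that] by (rule card_1_singletonE) blast
  show "inj_on f A"
  proof (rule inj_onI)
    fix a a' assume a: "a \<in> A" "a' \<in> A" "f a = f a'"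
    then have "f a \<in> B"
      using assms(1) by blast
    then obtain k where "{i \<in> A. f i = f a} = {k}"
      using fibre by blast
    then have "a = k" "a' = k"
      using a by (auto simp: set_eq_iff)
    then show "a = a'" by simp
  qed
  show "f ` A = B"
  proof (intro equalityI subsetI)
    fix j assume "j \<in> B"
    then obtain k where "{i \<in> A. f i = j} = {k}"
      using fibre by blast
    then have "k \<in> A" "f k = j" by auto
    then show "j \<in> f ` A" by blast
  qed (use assms(1) in blast)
qed

lemma Lpair_fun_upd_fun_upd:
  "i1 \<noteq> i2 \<Longrightarrow> Lpair L i1 i2 (x(i1 := a, i2 := b)) = Lpair L i1 i2 x"
  by (simp add: Lpair_def fun_upd_twist)

lemma monotone_bf_Lpair:
  assumes "monotone_bf S L" "x \<in> bconf S" "i1 \<in> S" "i2 \<in> S"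
  shows "mono (Lpair L i1 i2 x)" "mono (Lpair L i1 i2 x a)"
proof -
  have conf: "x(i1 := a, i2 := b) \<in> bconf S" for a b
    using assms(2-4) by (auto simp: bconf_def)
  have Lpair_le: "Lpair L i1 i2 x a b \<le> Lpair L i1 i2 x c d" if "a \<le> c" "b \<le> d" for a b c d
  proof -
    have "\<forall>i\<in>S. (x(i1 := a, i2 := b)) i \<longrightarrow> (x(i1 := c, i2 := d)) i"
      using that by (auto simp: le_bool_def)
    then show ?thesis
      using assms(1) conf unfolding monotone_bf_def Lpair_def le_bool_def by blast
  qed
  show "mono (Lpair L i1 i2 x)" "mono (Lpair L i1 i2 x a)"
    by (auto intro!: monoI le_funI Lpair_le)
qed

lemma corner_sum_eq_or_minus_and:
  fixes g :: "bool \<Rightarrow> bool \<Rightarrow> bool"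
  assumes "mono g" "\<And>a. mono (g a)"
  shows "of_bool (g True False) + of_bool (g False True) - of_bool (g True True) - of_bool (g False False)
           = (of_bool (g = f_or) - of_bool (g = f_and) :: real)"
proof -
  have "g False \<le> g True"
    by (rule monoD[OF assms(1)]) simp
  moreover have "g a False \<le> g a True" for a
    by (rule monoD[OF assms(2)]) simp
  ultimately show ?thesis
    unfolding f_or_def f_and_def fun_eq_iff all_bool_eq le_fun_def le_bool_def
    by (cases "g True True"; cases "g True False"; cases "g False True"; cases "g False False") auto
qed

lemma prob_corners_eq_prob_or_minus_and:
  fixes M :: "'x pmf" and g :: "'x \<Rightarrow> bool \<Rightarrow> bool \<Rightarrow> bool"
  assumes "\<And>x. x \<in> set_pmf M \<Longrightarrow> mono (g x)" "\<And>x a. x \<in> set_pmf M \<Longrightarrow> mono (g x a)"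
  shows "measure_pmf.prob M {x. g x True False} + measure_pmf.prob M {x. g x False True}
           - measure_pmf.prob M {x. g x True True} - measure_pmf.prob M {x. g x False False}
         = measure_pmf.prob M {x. g x = f_or} - measure_pmf.prob M {x. g x = f_and}"
proof -
  have prob: "measure_pmf.prob M {x. Q x} = (\<integral>x. of_bool (Q x) \<partial>M)" for Q
  proof -
    have "measure_pmf.prob M {x. Q x} = (\<integral>x. indicator {x. Q x} x \<partial>M)"
      by simp
    then show ?thesis
      by (simp add: indicator_def)
  qed
  have [simp]: "integrable M (\<lambda>x. of_bool (Q x) :: real)" for Q
    by (rule measure_pmf.integrable_const_bound[where B=1]) auto
  have corner: "of_bool (g x True False) + of_bool (g x False True)
                 - of_bool (g x True True) - of_bool (g x False False)
               = (of_bool (g x = f_or) - of_bool (g x = f_and) :: real)" if "x \<in> set_pmf M" for x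
    using assms(1)[OF that] assms(2)[OF that] by (rule corner_sum_eq_or_minus_and)
  have "(\<integral>x. of_bool (g x True False) + of_bool (g x False True)
           - of_bool (g x True True) - of_bool (g x False False) \<partial>M)
        = (\<integral>x. (of_bool (g x = f_or) - of_bool (g x = f_and) :: real) \<partial>M)"
    by (intro integral_cong_AE AE_pmfI corner) simp_all
  then show ?thesis
    unfolding prob by (simp add: integral_diff integral_add)
qed

lemma map_iid_bool_merge_pair:
  assumes "finite S" "\<psi> ` S \<subseteq> T" "i1 \<in> S" "i2 \<in> S" "j0 \<in> T"
    and "{i \<in> S. \<psi> i = j0} = {i1, i2}"
    and "\<And>j. j \<in> T \<Longrightarrow> j \<noteq> j0 \<Longrightarrow> card {i \<in> S. \<psi> i = j} = 1"
  shows "map_pmf (\<lambda>Y i. if i \<in> S then Y (\<psi> i) else False) (iid_bool T p)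
           = bind_pmf (bernoulli_pmf p)
               (\<lambda>c. map_pmf (\<lambda>x. x(i1 := c, i2 := c)) (iid_bool (S - {i1, i2}) p))"
proof -
  let ?R = "S - {i1, i2}" and ?T = "T - {j0}"
  let ?restr = "\<lambda>Y i. if i \<in> ?R then Y (\<psi> i) else False"
  have fibres: "{i \<in> ?R. \<psi> i = j} = {i \<in> S. \<psi> i = j}" if "j \<noteq> j0" for j
    using assms(6) that by blast
  have "bij_betw \<psi> ?R ?T"
    using assms(2,6,7) fibres by (intro bij_betw_if_card_fibres_eq_1) auto
  then have restr: "map_pmf ?restr (iid_bool ?T p) = iid_bool ?R p"
    using assms(1) by (intro iid_bool_bij_betw) auto
  have merge: "(\<lambda>i. if i \<in> S then (Y(j0 := c)) (\<psi> i) else False) = (?restr Y)(i1 := c, i2 := c)"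
    for Y c
    using assms(3,4,6) by (auto simp: fun_eq_iff)
  have "T = insert j0 ?T" "finite ?T"
    using assms(5) bij_betw_finite[THEN iffD1, OF \<open>bij_betw \<psi> ?R ?T\<close>] assms(1) by auto
  then have "iid_bool T p
      = bind_pmf (bernoulli_pmf p) (\<lambda>c. map_pmf (\<lambda>Y. Y(j0 := c)) (iid_bool ?T p))"
    by (metis iid_bool_insert Diff_iff insertI1)
  then have "map_pmf (\<lambda>Y i. if i \<in> S then Y (\<psi> i) else False) (iid_bool T p)
      = bind_pmf (bernoulli_pmf p)
          (\<lambda>c. map_pmf (\<lambda>Y. (?restr Y)(i1 := c, i2 := c)) (iid_bool ?T p))"
    by (simp add: map_bind_pmf map_pmf_comp merge)
  also have "\<dots> = bind_pmf (bernoulli_pmf p)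
          (\<lambda>c. map_pmf (\<lambda>x. x(i1 := c, i2 := c)) (map_pmf ?restr (iid_bool ?T p)))"
    by (simp only: map_pmf_comp)
  finally show ?thesis
    unfolding restr .
qed

theorem lemma6:
  fixes S :: "'a set" and T :: "'b set" and L :: "('a \<Rightarrow> bool) \<Rightarrow> bool"
    and \<psi> :: "'a \<Rightarrow> 'b" and p :: real and i1 i2 :: 'a and j0 :: 'b
  assumes "finite S" and "finite T"
    and "monotone_bf S L"
    and "\<psi> ` S \<subseteq> T"
    and "\<And>A. minimal_one_set S L A \<Longrightarrow> card (\<psi> ` A) = card A"
    and "0 \<le> p" and "p \<le> 1"
    and "i1 \<in> S" and "i2 \<in> S" and "i1 \<noteq> i2" and "j0 \<in> T"
    and "{i \<in> S. \<psi> i = j0} = {i1, i2}"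
    and "\<And>j. j \<in> T \<Longrightarrow> j \<noteq> j0 \<Longrightarrow> card {i \<in> S. \<psi> i = j} = 1"
  shows "measure_pmf.prob (iid_bool S p) {X. L X}
         - measure_pmf.prob (iid_bool T p) {Y. L (\<lambda>i. if i \<in> S then Y (\<psi> i) else False)}
       = p * (1 - p) *
         (measure_pmf.prob (iid_bool S p) {X. Lpair L i1 i2 X = f_or}
          - measure_pmf.prob (iid_bool S p) {X. Lpair L i1 i2 X = f_and})"
proof -
  define R where "R = S - {i1, i2}"
  let ?P = "iid_bool R p"
  define e where "e a b = measure_pmf.prob ?P {x. Lpair L i1 i2 x a b}" for a b
  have R: "S = insert i1 (insert i2 R)" "finite R" "i1 \<notin> R" "i2 \<notin> R"
    using assms(1,8,9) by (auto simp: R_def)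
  note prob_S_cases = prob_iid_bool_insert2[OF R(2-4) assms(10,6,7), folded R(1)]
  have prob_S: "measure_pmf.prob (iid_bool S p) {X. L X}
      = p * (p * e True True + (1 - p) * e True False)
        + (1 - p) * (p * e False True + (1 - p) * e False False)"
    by (simp add: prob_S_cases e_def Lpair_def)
  have prob_T: "measure_pmf.prob (iid_bool T p) {Y. L (\<lambda>i. if i \<in> S then Y (\<psi> i) else False)}
      = p * e True True + (1 - p) * e False False"
    using map_iid_bool_merge_pair[OF assms(1,4,8,9,11-13), of p, folded R_def]
      measure_map_pmf[of "\<lambda>Y i. if i \<in> S then Y (\<psi> i) else False" "iid_bool T p" "{X. L X}"]
    by (simp add: vimage_def measure_pmf_prob_bind_bernoulli assms(6,7) e_def Lpair_def)
  have prob_Lpair: "measure_pmf.prob (iid_bool S p) {X. Lpair L i1 i2 X = f}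
      = measure_pmf.prob ?P {x. Lpair L i1 i2 x = f}" for f
    by (simp add: prob_S_cases Lpair_fun_upd_fun_upd[OF assms(10)] algebra_simps)
  have "e True False + e False True - e True True - e False False
      = measure_pmf.prob ?P {x. Lpair L i1 i2 x = f_or} - measure_pmf.prob ?P {x. Lpair L i1 i2 x = f_and}"
  proof (unfold e_def, rule prob_corners_eq_prob_or_minus_and)
    fix x assume "x \<in> set_pmf ?P"
    then have "x \<in> bconf S"
      using set_pmf_iid_bool[OF R(2)] R(1) by (auto simp: bconf_def)
    then show "mono (Lpair L i1 i2 x)" "mono (Lpair L i1 i2 x a)" for a
      using monotone_bf_Lpair[OF assms(3) _ assms(8,9)] by blast+
  qed
  then show ?thesis
    unfolding prob_S prob_T prob_Lpair by algebra
qed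

end
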